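(* Let $G$ be a simple graph. The spectrum of the adjacency matrix of the triangular signed graph $G_{\vartriangle}$ does not depend on the chosen orientation of $G$ (of its edges and triangles).
   Context: Each edge of $G$ is oriented and each triangle $\vartriangle$ of $G$ is given a cyclic orientation; for an edge $e$ of $\vartriangle$ write $e\in\vartriangle^+$ if the orientation of $e$ agrees with that of $\vartriangle$ and $e\in\vartriangle^-$ otherwise. The triangular signed graph $G_{\vartriangle}$ has the triangles of $G$ as vertices; two distinct triangles $\vartriangle_1,\vartriangle_2$ sharing an edge $e$ are joined by a positive edge if $e\in\vartriangle_1^+\cap\vartriangle_2^+$ or $e\in\vartriangle_1^-\cap\vartriangle_2^-$, and by a negative edge otherwise; triangles sharing no edge are non-adjacent. Its adjacency matrix has entry $1$ for positive edges, $-1$ for negative edges and $0$ elsewhere. *)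

theory Defs
  imports "Jordan_Normal_Form.Determinant" "Jordan_Normal_Form.Char_Poly"
begin

definition simple_graph :: "'a set \<Rightarrow> ('a \<Rightarrow> 'a \<Rightarrow> bool) \<Rightarrow> bool" where
  "simple_graph V E \<longleftrightarrow> finite V \<and> (\<forall>u v. E u v \<longrightarrow> u \<in> V \<and> v \<in> V)
     \<and> (\<forall>u v. E u v \<longrightarrow> E v u) \<and> (\<forall>u. \<not> E u u)"

definition triangles :: "'a set \<Rightarrow> ('a \<Rightarrow> 'a \<Rightarrow> bool) \<Rightarrow> 'a set set" where
  "triangles V E = {T. \<exists>a b c. T = {a, b, c} \<and> a \<in> V \<and> b \<in> V \<and> c \<in> V
      \<and> a \<noteq> b \<and> b \<noteq> c \<and> a \<noteq> c \<and> E a b \<and> E b c \<and> E a c}"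

text \<open>Edge orientation: ori u v means the edge {u,v} is oriented from u to v.\<close>
definition edge_orientation :: "('a \<Rightarrow> 'a \<Rightarrow> bool) \<Rightarrow> ('a \<Rightarrow> 'a \<Rightarrow> bool) \<Rightarrow> bool" where
  "edge_orientation E ori \<longleftrightarrow> (\<forall>u v. ori u v \<longrightarrow> E u v)
     \<and> (\<forall>u v. E u v \<longrightarrow> (ori u v \<or> ori v u)) \<and> (\<forall>u v. \<not> (ori u v \<and> ori v u))"

definition triangle_orientation ::
  "'a set \<Rightarrow> ('a \<Rightarrow> 'a \<Rightarrow> bool) \<Rightarrow> ('a set \<Rightarrow> 'a \<Rightarrow> 'a \<Rightarrow> bool) \<Rightarrow> bool" where
  "triangle_orientation V E tor \<longleftrightarrow> (\<forall>T \<in> triangles V E.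
      (\<forall>x y. tor T x y \<longrightarrow> x \<in> T \<and> y \<in> T \<and> x \<noteq> y)
    \<and> (\<forall>x y. \<not> (tor T x y \<and> tor T y x))
    \<and> (\<forall>x \<in> T. \<exists>!y. tor T x y))"

text \<open>e \<in> T^+ : the orientation of edge e agrees with the cyclic orientation of T.\<close>
definition edge_pos :: "('a \<Rightarrow> 'a \<Rightarrow> bool) \<Rightarrow> ('a set \<Rightarrow> 'a \<Rightarrow> 'a \<Rightarrow> bool) \<Rightarrow> 'a set \<Rightarrow> 'a set \<Rightarrow> bool" where
  "edge_pos ori tor T e \<longleftrightarrow> (\<exists>u v. e = {u, v} \<and> ori u v \<and> tor T u v)"

definition tri_adj :: "('a \<Rightarrow> 'a \<Rightarrow> bool) \<Rightarrow> ('a set \<Rightarrow> 'a \<Rightarrow> 'a \<Rightarrow> bool) \<Rightarrow> 'a set \<Rightarrow> 'a set \<Rightarrow> int" where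
  "tri_adj ori tor T1 T2 =
    (if T1 \<noteq> T2 \<and> card (T1 \<inter> T2) = 2 then
       (if edge_pos ori tor T1 (T1 \<inter> T2) = edge_pos ori tor T2 (T1 \<inter> T2) then 1 else -1)
     else 0)"

text \<open>A fixed enumeration of the triangles (the spectrum does not depend on it).\<close>
definition tri_list :: "'a set \<Rightarrow> ('a \<Rightarrow> 'a \<Rightarrow> bool) \<Rightarrow> 'a set list" where
  "tri_list V E = (SOME xs. distinct xs \<and> set xs = triangles V E)"

definition tri_adj_matrix ::
  "'a set \<Rightarrow> ('a \<Rightarrow> 'a \<Rightarrow> bool) \<Rightarrow> ('a \<Rightarrow> 'a \<Rightarrow> bool) \<Rightarrow> ('a set \<Rightarrow> 'a \<Rightarrow> 'a \<Rightarrow> bool) \<Rightarrow> complex mat" where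
  "tri_adj_matrix V E ori tor =
    (let xs = tri_list V E in
     mat (length xs) (length xs) (\<lambda>(i, j). of_int (tri_adj ori tor (xs ! i) (xs ! j))))"

text \<open>Spectrum with multiplicities: algebraic multiplicity of each complex number as
  an eigenvalue (root multiplicity in the characteristic polynomial).\<close>
definition eig_mult :: "complex mat \<Rightarrow> complex \<Rightarrow> nat" where
  "eig_mult A z = order z (char_poly A)"

end

(*
  Edge orientations do not matter at all: if triangles T1, T2 share the edge {u, v}, the sign
  of their adjacency compares (ori u v \<longleftrightarrow> tor T1 u v) with (ori u v \<longleftrightarrow> tor T2 u v),
  and ori u v cancels. The two cyclic orientations of a 3-set are converse to each other, so
  passing from tor1 to tor2 reverses some set of triangles, and reversing T negates row and
  column T. Hence the two adjacency matrices are conjugate by a diagonal matrix of signs, and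
  similar matrices have the same characteristic polynomial.
*)

theory Submission
  imports Defs
begin

definition cyclic_orientation :: "'a set \<Rightarrow> ('a \<Rightarrow> 'a \<Rightarrow> bool) \<Rightarrow> bool" where
  "cyclic_orientation T R \<longleftrightarrow> (\<forall>x y. R x y \<longrightarrow> x \<in> T \<and> y \<in> T \<and> x \<noteq> y)
     \<and> (\<forall>x y. \<not> (R x y \<and> R y x)) \<and> (\<forall>x \<in> T. \<exists>!y. R x y)"

definition cycle3 :: "'a \<Rightarrow> 'a \<Rightarrow> 'a \<Rightarrow> 'a \<Rightarrow> 'a \<Rightarrow> bool" where
  "cycle3 a b c x y \<longleftrightarrow> x = a \<and> y = b \<or> x = b \<and> y = c \<or> x = c \<and> y = a"

lemma cyclic_orientation_3_cases:
  assumes R: "cyclic_orientation {a, b, c} R" and abc: "distinct [a, b, c]"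
  shows "R = cycle3 a b c \<or> R = cycle3 a c b"
proof -
  have dom: "\<And>x y. R x y \<Longrightarrow> x \<in> {a, b, c} \<and> y \<in> {a, b, c} \<and> x \<noteq> y"
    and asym: "\<And>x y. R x y \<Longrightarrow> \<not> R y x"
    and succ: "\<And>x. x \<in> {a, b, c} \<Longrightarrow> \<exists>!y. R x y"
    using R unfolding cyclic_orientation_def by blast+
  have uniq: "\<And>x y z. R x y \<Longrightarrow> R x z \<Longrightarrow> y = z"
    using dom succ by metis
  obtain sa sb sc where s: "R a sa" "R b sb" "R c sc"
    using succ[of a] succ[of b] succ[of c] by auto
  have R_iff: "R x y \<longleftrightarrow> x = a \<and> y = sa \<or> x = b \<and> y = sb \<or> x = c \<and> y = sc" for x y
    using dom[of x y] uniq[of x y] s by auto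
  have "sa = b \<and> sb = c \<and> sc = a \<or> sa = c \<and> sb = a \<and> sc = b"
    using dom[OF s(1)] dom[OF s(2)] dom[OF s(3)] asym s abc by auto
  then show ?thesis
    unfolding R_iff[abs_def] cycle3_def using abc by auto
qed

lemma cyclic_orientation_converse_iff:
  assumes "cyclic_orientation T R" "card T = 3" "u \<in> T" "v \<in> T" "u \<noteq> v"
  shows "R v u \<longleftrightarrow> \<not> R u v"
proof -
  obtain a b c where T: "T = {a, b, c}" "distinct [a, b, c]"
    using assms(2) by (auto simp: card_3_iff)
  then have "R = cycle3 a b c \<or> R = cycle3 a c b"
    using cyclic_orientation_3_cases assms(1) by simp
  then show ?thesis
    using assms(3-5) T unfolding cycle3_def by auto
qed

lemma cyclic_orientation_3_eq_or_converse:
  assumes "cyclic_orientation T R" "cyclic_orientation T S" "card T = 3"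
  shows "R = S \<or> R = S\<inverse>\<inverse>"
proof -
  obtain a b c where T: "T = {a, b, c}" "distinct [a, b, c]"
    using assms(3) by (auto simp: card_3_iff)
  have "cycle3 a c b = (cycle3 a b c)\<inverse>\<inverse>" "cycle3 a b c = (cycle3 a c b)\<inverse>\<inverse>"
    unfolding cycle3_def by (auto simp: fun_eq_iff)
  then show ?thesis
    using cyclic_orientation_3_cases[OF assms(1)[unfolded T(1)] T(2)]
      cyclic_orientation_3_cases[OF assms(2)[unfolded T(1)] T(2)] by metis
qed

lemma cyclic_orientation_3_iff:
  assumes "cyclic_orientation T R" "cyclic_orientation T S" "card T = 3"
    and "u \<in> T" "v \<in> T" "u \<noteq> v"
  shows "R u v \<longleftrightarrow> (S u v \<longleftrightarrow> R = S)"
proof (cases "R = S")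
  case False
  then have "R = S\<inverse>\<inverse>"
    using cyclic_orientation_3_eq_or_converse[OF assms(1-3)] by blast
  then show ?thesis
    using False cyclic_orientation_converse_iff[OF assms(2,3,5,4)] assms(6) by simp
qed simp

lemma cyclic_orientation_triangle:
  "triangle_orientation V E tor \<Longrightarrow> T \<in> triangles V E \<Longrightarrow> cyclic_orientation T (tor T)"
  unfolding triangle_orientation_def cyclic_orientation_def by blast

lemma card_triangle: "T \<in> triangles V E \<Longrightarrow> card T = 3"
  unfolding triangles_def by auto

lemma triangle_edge:
  assumes "simple_graph V E" "T \<in> triangles V E" "u \<in> T" "v \<in> T" "u \<noteq> v"
  shows "E u v"
  using assms unfolding simple_graph_def triangles_def by blast

lemma finite_triangles: "simple_graph V E \<Longrightarrow> finite (triangles V E)"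
  unfolding simple_graph_def triangles_def
  by (rule finite_subset[of _ "Pow V"]) auto

lemma set_tri_list:
  assumes "simple_graph V E"
  shows "set (tri_list V E) = triangles V E"
proof -
  have "\<exists>xs. distinct xs \<and> set xs = triangles V E"
    using finite_distinct_list[OF finite_triangles[OF assms]] by blast
  then show ?thesis
    unfolding tri_list_def by (rule someI2_ex[where Q = "\<lambda>xs. set xs = triangles V E"]) simp
qed

lemma edge_pos_triangle_iff:
  assumes G: "simple_graph V E" and ori: "edge_orientation E ori"
    and tor: "triangle_orientation V E tor"
    and T: "T \<in> triangles V E" "u \<in> T" "v \<in> T" "u \<noteq> v"
  shows "edge_pos ori tor T {u, v} \<longleftrightarrow> (ori u v \<longleftrightarrow> tor T u v)"
proof -
  have "ori v u \<longleftrightarrow> \<not> ori u v"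
    using triangle_edge[OF G T] ori unfolding edge_orientation_def by blast
  moreover have "tor T v u \<longleftrightarrow> \<not> tor T u v"
    using cyclic_orientation_converse_iff[OF cyclic_orientation_triangle[OF tor T(1)]
        card_triangle[OF T(1)] T(2-4)] .
  ultimately show ?thesis
    unfolding edge_pos_def by (auto simp: doubleton_eq_iff)
qed

lemma tri_adj_adjacent:
  assumes G: "simple_graph V E" and ori: "edge_orientation E ori"
    and tor: "triangle_orientation V E tor"
    and T: "T1 \<in> triangles V E" "T2 \<in> triangles V E" "T1 \<noteq> T2"
    and uv: "T1 \<inter> T2 = {u, v}" "u \<noteq> v"
  shows "tri_adj ori tor T1 T2 = (if tor T1 u v \<longleftrightarrow> tor T2 u v then 1 else -1)"
proof -
  have "u \<in> T1" "v \<in> T1" "u \<in> T2" "v \<in> T2" "card (T1 \<inter> T2) = 2"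
    using uv by auto
  then have "tri_adj ori tor T1 T2
      = (if (ori u v \<longleftrightarrow> tor T1 u v) \<longleftrightarrow> (ori u v \<longleftrightarrow> tor T2 u v) then 1 else -1)"
    using uv T edge_pos_triangle_iff[OF G ori tor] unfolding tri_adj_def by simp
  moreover have "((ori u v \<longleftrightarrow> tor T1 u v) \<longleftrightarrow> (ori u v \<longleftrightarrow> tor T2 u v))
      \<longleftrightarrow> (tor T1 u v \<longleftrightarrow> tor T2 u v)"
    by blast
  ultimately show ?thesis
    by simp
qed

lemma tri_adj_edge_orientation_indep:
  assumes G: "simple_graph V E"
    and "edge_orientation E ori1" "edge_orientation E ori2"
    and tor: "triangle_orientation V E tor"
    and T: "T1 \<in> triangles V E" "T2 \<in> triangles V E"
  shows "tri_adj ori1 tor T1 T2 = tri_adj ori2 tor T1 T2"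
proof (cases "T1 \<noteq> T2 \<and> card (T1 \<inter> T2) = 2")
  case True
  then obtain u v where "T1 \<inter> T2 = {u, v}" "u \<noteq> v"
    by (auto simp: card_2_iff)
  with True show ?thesis
    using tri_adj_adjacent[OF G _ tor T] assms(2,3) by simp
qed (auto simp: tri_adj_def)

definition reversal_sign ::
  "('a set \<Rightarrow> 'a \<Rightarrow> 'a \<Rightarrow> bool) \<Rightarrow> ('a set \<Rightarrow> 'a \<Rightarrow> 'a \<Rightarrow> bool) \<Rightarrow> 'a set \<Rightarrow> int" where
  "reversal_sign tor1 tor2 T = (if tor1 T = tor2 T then 1 else -1)"

lemma tri_adj_reversal:
  assumes G: "simple_graph V E" and ori: "edge_orientation E ori"
    and tor1: "triangle_orientation V E tor1" and tor2: "triangle_orientation V E tor2"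
    and T: "T1 \<in> triangles V E" "T2 \<in> triangles V E"
  shows "tri_adj ori tor1 T1 T2
    = reversal_sign tor1 tor2 T1 * tri_adj ori tor2 T1 T2 * reversal_sign tor1 tor2 T2"
proof (cases "T1 \<noteq> T2 \<and> card (T1 \<inter> T2) = 2")
  case True
  then obtain u v where uv: "T1 \<inter> T2 = {u, v}" "u \<noteq> v"
    by (auto simp: card_2_iff)
  have "u \<in> T1" "v \<in> T1" "u \<in> T2" "v \<in> T2"
    using uv by auto
  then have "tor1 Ti u v \<longleftrightarrow> (tor2 Ti u v \<longleftrightarrow> tor1 Ti = tor2 Ti)"
    if "Ti = T1 \<or> Ti = T2" for Ti
    using that T cyclic_orientation_3_iff[OF cyclic_orientation_triangle[OF tor1]
        cyclic_orientation_triangle[OF tor2] card_triangle _ _ uv(2)] by metis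
  then show ?thesis
    using True tri_adj_adjacent[OF G ori tor1 T _ uv] tri_adj_adjacent[OF G ori tor2 T _ uv]
    unfolding reversal_sign_def by auto
qed (auto simp: tri_adj_def)

lemma char_poly_eq_if_sign_conjugate:
  fixes A B :: "'a :: comm_ring_1 mat"
  assumes A: "A \<in> carrier_mat n n" and B: "B \<in> carrier_mat n n"
    and s: "\<And>i. i < n \<Longrightarrow> s i * s i = 1"
    and AB: "\<And>i j. i < n \<Longrightarrow> j < n \<Longrightarrow> A $$ (i, j) = s i * B $$ (i, j) * s j"
  shows "char_poly A = char_poly B"
proof -
  define D where "D = mat_diag n s"
  have D: "D \<in> carrier_mat n n"
    unfolding D_def by simp
  have DD: "D * D = 1\<^sub>m n"
    unfolding D_def mat_diag_diag by (rule eq_matI) (auto simp: mat_diag_def s)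
  have "D * B * D = mat n n (\<lambda>(i, j). s i * B $$ (i, j) * s j)"
    unfolding D_def mat_diag_mult_left[OF B] by (subst mat_diag_mult_right[of _ n n]) auto
  then have "A = D * B * D"
    using A AB by (auto intro!: eq_matI)
  then have "similar_mat A B"
    unfolding similar_mat_def using similar_mat_witI[OF DD DD _ A B D D] by blast
  then show ?thesis
    by (rule char_poly_similar)
qed

lemma tri_adj_matrix_carrier:
  "tri_adj_matrix V E ori tor \<in> carrier_mat (length (tri_list V E)) (length (tri_list V E))"
  unfolding tri_adj_matrix_def Let_def by simp

lemma index_tri_adj_matrix:
  assumes "i < length (tri_list V E)" "j < length (tri_list V E)"
  shows "tri_adj_matrix V E ori tor $$ (i, j)
    = of_int (tri_adj ori tor (tri_list V E ! i) (tri_list V E ! j))"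
  unfolding tri_adj_matrix_def Let_def using assms by simp

theorem corollary5p2:
  fixes V :: "'a set" and E :: "'a \<Rightarrow> 'a \<Rightarrow> bool"
    and ori1 ori2 :: "'a \<Rightarrow> 'a \<Rightarrow> bool"
    and tor1 tor2 :: "'a set \<Rightarrow> 'a \<Rightarrow> 'a \<Rightarrow> bool"
  assumes "simple_graph V E"
    and "edge_orientation E ori1" and "triangle_orientation V E tor1"
    and "edge_orientation E ori2" and "triangle_orientation V E tor2"
  shows "\<forall>z. eig_mult (tri_adj_matrix V E ori1 tor1) z = eig_mult (tri_adj_matrix V E ori2 tor2) z"
proof -
  define xs where "xs = tri_list V E"
  define s :: "nat \<Rightarrow> complex" where "s i = of_int (reversal_sign tor1 tor2 (xs ! i))" for i
  have xs: "xs ! i \<in> triangles V E" if "i < length xs" for i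
    using set_tri_list[OF assms(1)] nth_mem[OF that] unfolding xs_def by blast
  have "char_poly (tri_adj_matrix V E ori1 tor1) = char_poly (tri_adj_matrix V E ori2 tor2)"
  proof (rule char_poly_eq_if_sign_conjugate[OF tri_adj_matrix_carrier tri_adj_matrix_carrier])
    show "s i * s i = 1" for i
      unfolding s_def reversal_sign_def by simp
    fix i j assume ij: "i < length (tri_list V E)" "j < length (tri_list V E)"
    have "tri_adj ori1 tor1 (xs ! i) (xs ! j) = tri_adj ori2 tor1 (xs ! i) (xs ! j)"
      using tri_adj_edge_orientation_indep[OF assms(1,2,4,3) xs xs] ij unfolding xs_def by blast
    also have "\<dots> = reversal_sign tor1 tor2 (xs ! i) * tri_adj ori2 tor2 (xs ! i) (xs ! j)
        * reversal_sign tor1 tor2 (xs ! j)"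
      using tri_adj_reversal[OF assms(1,4,3,5) xs xs] ij unfolding xs_def by blast
    finally show "tri_adj_matrix V E ori1 tor1 $$ (i, j)
        = s i * tri_adj_matrix V E ori2 tor2 $$ (i, j) * s j"
      unfolding index_tri_adj_matrix[OF ij] s_def xs_def[symmetric] by simp
  qed
  then show ?thesis
    unfolding eig_mult_def by simp
qed

end
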